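(* For integers $n\ge j\ge1$ and $m\ge0$ let $T_{n,j,m}$ be the number of ordered increasing $k$-trees of size $n$ in which node $j$ has out-degree $m$. Then $T_{n,j,m}=((k+1)n-km-2k)\,T_{n-1,j,m}+km\,T_{n-1,j,m-1}$ for $n>j$, and the generating function $T^{[j]}(z,v):=\sum_{n\ge j}\sum_{m\ge0}T_{n,j,m}\frac{z^{n-j}}{(n-j)!}v^m$ is given by \[ T^{[j]}(z,v)=\frac{T_j}{\Big(1-v\big(1-(1-(k+1)z)^{\frac{k}{k+1}}\big)\Big)\,(1-(k+1)z)^{\frac{kj-k+j+1}{k+1}}}, \] where $T_j=\prod_{\ell=0}^{j-1}(1+(k+1)\ell)$ is the number of ordered increasing $k$-trees of size $j$.
   Context: Fix an integer $k\ge1$. An ordered increasing $k$-tree of size $n\ge0$ is built as follows. Start with the root-clique $K_0$: $k$ pairwise adjacent vertices labelled $0_1,\dots,0_k$ (the root nodes; each label $0_\ell$ has value $0$). For $j=1,\dots,n$ in turn, node $j$ is inserted by choosing a currently existing $k$-clique $K$ and attaching $j$ to it, i.e. adding edges from $j$ to all $k$ vertices of $K$; $j$ is then a child of $K$ and the vertices of $K$ are the parents of $j$. The $k$-cliques available for attachment are the root-clique and, for every previously inserted node $x$ attached to a clique $K'$, the $k$ cliques $\{x\}\cup(K'\setminus\{w\})$, $w\in K'$. The children of each $k$-clique are linearly ordered: if $K$ currently has $d^+(K)$ children, there are $d^+(K)+1$ positions at which the new child may be placed, and the choice of position is part of the structure; distinct sequences of choices give distinct trees. The out-degree of a node $u$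 is the number of nodes having $u$ as a parent. Convention: $T_{n,j,m}=0$ for $m<0$, $T_{j,j,0}=T_j$ and $T_{j,j,m}=0$ for $m>0$. *)

theory Defs
  imports "HOL-Computational_Algebra.Formal_Power_Series"
begin

text \<open>Vertices: the root nodes 0_1..0_k are Root 1 .. Root k; node j (j >= 1) is Nd j.\<close>
datatype vtx = Root nat | Nd nat

text \<open>A tree of size n is the sequence of choices ts of length n: entry i (0-based)
  describes the insertion of node i+1, namely the clique it is attached to and the
  position (0 .. current number of children of that clique) among the children.\<close>

definition root_clique :: "nat \<Rightarrow> vtx set" where
  "root_clique k = Root ` {1..k}"

text \<open>k-cliques available for attachment after the insertions ts.\<close>
definition avail :: "nat \<Rightarrow> (vtx set \<times> nat) list \<Rightarrow> vtx set set" where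
  "avail k ts = insert (root_clique k)
     (\<Union>i<length ts. (\<lambda>w. insert (Nd (Suc i)) (fst (ts ! i) - {w})) ` fst (ts ! i))"

definition clique_outdeg :: "(vtx set \<times> nat) list \<Rightarrow> vtx set \<Rightarrow> nat" where
  "clique_outdeg ts K = card {i. i < length ts \<and> fst (ts ! i) = K}"

definition valid_tree :: "nat \<Rightarrow> (vtx set \<times> nat) list \<Rightarrow> bool" where
  "valid_tree k ts \<longleftrightarrow> (\<forall>i<length ts. fst (ts ! i) \<in> avail k (take i ts)
      \<and> snd (ts ! i) \<le> clique_outdeg (take i ts) (fst (ts ! i)))"

definition ktrees :: "nat \<Rightarrow> nat \<Rightarrow> (vtx set \<times> nat) list set" where
  "ktrees k n = {ts. length ts = n \<and> valid_tree k ts}"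

definition node_outdeg :: "(vtx set \<times> nat) list \<Rightarrow> nat \<Rightarrow> nat" where
  "node_outdeg ts u = card {i. i < length ts \<and> Nd u \<in> fst (ts ! i)}"

definition Tsize :: "nat \<Rightarrow> nat \<Rightarrow> nat" where
  "Tsize k n = card (ktrees k n)"

definition Tcount :: "nat \<Rightarrow> nat \<Rightarrow> nat \<Rightarrow> nat \<Rightarrow> nat" where
  "Tcount k n j m = card {ts \<in> ktrees k n. node_outdeg ts j = m}"

definition fps_lin_pow :: "real \<Rightarrow> real \<Rightarrow> real fps" where
  "fps_lin_pow c a = fps_binomial a oo (fps_const (- c) * fps_X)"

end

theory Submission
  imports Defs
begin

text \<open>
  A tree of size n+1 is a tree of size n extended by one admissible choice
  (a clique available for attachment together with a position among its children).
  Every available clique is a k-set of vertices, and the available cliques are the root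
  clique plus, injectively, one clique for each pair (inserted node, parent replaced),
  so there are 1 + k n of them; adding the n already existing children gives
  (k+1) n + 1 admissible choices.  The choices whose clique contains node j number
  k (1 + d), where d is the current out-degree of j.  Counting extensions therefore yields
  T_{n+1} = ((k+1) n + 1) T_n (hence the product formula) and the recurrence for T_{n,j,m}.

  For the generating function, the recurrence says that the exponential generating
  function A_m of (T_{j+i,j,m})_i satisfies the linear ODE
  (1-(k+1)z) A_m' = (\<gamma> - k m) A_m + k m A_{m-1} with \<gamma> = (k+1) j - k + 1.
  The series T_j W^m (1-(k+1)z)^{-\<gamma>/(k+1)}, with W = 1 - (1-(k+1)z)^{k/(k+1)}, solve the same
  ODEs with the same constant terms, so they coincide with A_m by uniqueness; summing
  \<Sum>_m v^m A_m telescopes against the factor 1 - v W and gives the closed form.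
\<close>

section \<open>Counting insertion sequences\<close>

definition vertices :: "nat \<Rightarrow> nat \<Rightarrow> vtx set" where
  "vertices k n = Root ` {1..k} \<union> Nd ` {1..n}"

definition choices :: "nat \<Rightarrow> (vtx set \<times> nat) list \<Rightarrow> (vtx set \<times> nat) set" where
  "choices k ts = Sigma (avail k ts) (\<lambda>K. {..clique_outdeg ts K})"

definition child_clique :: "(vtx set \<times> nat) list \<Rightarrow> nat \<Rightarrow> vtx \<Rightarrow> vtx set" where
  "child_clique ts i w = insert (Nd (Suc i)) (fst (ts ! i) - {w})"

text \<open>The pairs (inserted node, one of its parents); they index the non-root cliques.\<close>
definition parent_pairs :: "(vtx set \<times> nat) list \<Rightarrow> (nat \<times> vtx) set" where
  "parent_pairs ts = Sigma {..<length ts} (\<lambda>i. fst (ts ! i))"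

lemma avail_Nil: "avail k [] = {root_clique k}"
  unfolding avail_def by simp

lemma avail_snoc:
  "avail k (ts @ [x]) = avail k ts \<union> (\<lambda>w. insert (Nd (Suc (length ts))) (fst x - {w})) ` fst x"
  unfolding avail_def by (auto simp: nth_append lessThan_Suc)

lemma avail_take: "avail k (take i ts) \<subseteq> avail k ts"
  unfolding avail_def by auto

lemma avail_decomp:
  "avail k ts = insert (root_clique k) ((\<lambda>(i, w). child_clique ts i w) ` parent_pairs ts)"
  unfolding avail_def parent_pairs_def child_clique_def by auto

lemma root_clique_not_child: "root_clique k \<notin> (\<lambda>(i, w). child_clique ts i w) ` parent_pairs ts"
  unfolding root_clique_def child_clique_def by auto

lemma clique_outdeg_snoc:
  "clique_outdeg (ts @ [x]) K = clique_outdeg ts K + (if fst x = K then 1 else 0)"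
proof -
  have "{i. i < length (ts @ [x]) \<and> fst ((ts @ [x]) ! i) = K}
        = {i. i < length ts \<and> fst (ts ! i) = K} \<union> (if fst x = K then {length ts} else {})"
    by (auto simp: nth_append less_Suc_eq)
  then show ?thesis unfolding clique_outdeg_def by (auto simp: card_insert_if)
qed

lemma node_outdeg_snoc:
  "node_outdeg (ts @ [x]) j = node_outdeg ts j + (if Nd j \<in> fst x then 1 else 0)"
proof -
  have "{i. i < length (ts @ [x]) \<and> Nd j \<in> fst ((ts @ [x]) ! i)}
        = {i. i < length ts \<and> Nd j \<in> fst (ts ! i)} \<union> (if Nd j \<in> fst x then {length ts} else {})"
    by (auto simp: nth_append less_Suc_eq)
  then show ?thesis unfolding node_outdeg_def by (auto simp: card_insert_if)
qed

lemma node_outdeg_le: "node_outdeg ts j \<le> length ts"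
  unfolding node_outdeg_def by (rule card_mono[of "{..<length ts}", simplified]) auto

lemma valid_Nil: "valid_tree k []"
  unfolding valid_tree_def by simp

lemma valid_snoc:
  "valid_tree k (ts @ [x]) \<longleftrightarrow> valid_tree k ts \<and> x \<in> choices k ts"
  unfolding valid_tree_def choices_def by (cases x) (auto simp: nth_append less_Suc_eq)

lemma valid_take: "valid_tree k ts \<Longrightarrow> valid_tree k (take i ts)"
  unfolding valid_tree_def by (auto simp: min_def)

lemma avail_clique_props:
  assumes "valid_tree k ts" "K \<in> avail k ts"
  shows "finite K \<and> card K = k \<and> K \<subseteq> vertices k (length ts)"
  using assms
proof (induction ts arbitrary: K rule: rev_induct)
  case Nil
  have "card (root_clique k) = k"
    unfolding root_clique_def by (subst card_image) (auto simp: inj_on_def)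
  with Nil show ?case by (auto simp: avail_Nil root_clique_def vertices_def)
next
  case (snoc x ts)
  have valid: "valid_tree k ts" and x_avail: "fst x \<in> avail k ts"
    using snoc.prems(1) by (auto simp: valid_snoc choices_def)
  have grow: "vertices k (length ts) \<subseteq> vertices k (length (ts @ [x]))"
    by (auto simp: vertices_def)
  have Kx: "finite (fst x)" "card (fst x) = k" "fst x \<subseteq> vertices k (length ts)"
    using snoc.IH[OF valid x_avail] by auto
  have fresh: "Nd (Suc (length ts)) \<notin> fst x"
    using Kx(3) by (auto simp: vertices_def)
  from snoc.prems(2) consider "K \<in> avail k ts"
    | w where "w \<in> fst x" "K = insert (Nd (Suc (length ts))) (fst x - {w})"
    unfolding avail_snoc by blast
  then show ?case
  proof cases
    case 1
    then show ?thesis using snoc.IH[OF valid] grow by blast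
  next
    case (2 w)
    have "card (fst x - {w}) = k - 1" "k \<ge> 1"
      using Kx \<open>w \<in> fst x\<close> by (auto simp: card_gt_0_iff Suc_le_eq)
    then show ?thesis using 2 Kx fresh grow by (auto simp: vertices_def)
  qed
qed

lemma attached_clique_props:
  assumes "valid_tree k ts" "i < length ts"
  shows "finite (fst (ts ! i)) \<and> card (fst (ts ! i)) = k \<and> fst (ts ! i) \<subseteq> vertices k i"
proof -
  have "fst (ts ! i) \<in> avail k (take i ts)"
    using assms unfolding valid_tree_def by auto
  from avail_clique_props[OF valid_take[OF assms(1)] this] assms(2) show ?thesis
    by (simp add: min_def)
qed

lemma attached_clique_avail:
  "valid_tree k ts \<Longrightarrow> i < length ts \<Longrightarrow> fst (ts ! i) \<in> avail k ts"
  using avail_take[of k i ts] unfolding valid_tree_def by auto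

lemma child_clique_subset:
  "valid_tree k ts \<Longrightarrow> i < length ts \<Longrightarrow> child_clique ts i w \<subseteq> vertices k (Suc i)"
  using attached_clique_props[of k ts i] unfolding child_clique_def vertices_def by auto

text \<open>Distinct parent pairs give distinct cliques: the newest vertex of the clique determines
  the node, and the missing parent determines the pair.\<close>
lemma child_clique_inj:
  assumes "valid_tree k ts"
  shows "inj_on (\<lambda>(i, w). child_clique ts i w) (parent_pairs ts)"
proof (rule inj_onI, clarify)
  fix i w i' w'
  assume p: "(i, w) \<in> parent_pairs ts" "(i', w') \<in> parent_pairs ts"
     and eq: "child_clique ts i w = child_clique ts i' w'"
  have il: "i < length ts" "i' < length ts" "w \<in> fst (ts ! i)" "w' \<in> fst (ts ! i')"
    using p by (auto simp: parent_pairs_def)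
  have newest: "\<not> a < b"
    if "a < length ts" "b < length ts" "child_clique ts a u = child_clique ts b u'" for a b u u'
  proof
    assume "a < b"
    have "Nd (Suc b) \<in> child_clique ts a u"
      using that(3) by (simp add: child_clique_def)
    then have "Nd (Suc b) \<in> vertices k (Suc a)"
      using child_clique_subset[OF assms that(1)] by blast
    with \<open>a < b\<close> show False by (auto simp: vertices_def)
  qed
  have ii: "i = i'"
    using newest[OF il(1,2) eq] newest[OF il(2,1) eq[symmetric]] by simp
  have fresh: "Nd (Suc i) \<notin> fst (ts ! i)"
    using attached_clique_props[OF assms il(1)] by (auto simp: vertices_def)
  have "child_clique ts i w - {Nd (Suc i)} = child_clique ts i w' - {Nd (Suc i)}"
    using eq ii by simp
  then have "fst (ts ! i) - {w} = fst (ts ! i) - {w'}"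
    using fresh unfolding child_clique_def by auto
  with il ii show "i = i' \<and> w = w'" by blast
qed

lemma finite_parent_pairs: "valid_tree k ts \<Longrightarrow> finite (parent_pairs ts)"
  unfolding parent_pairs_def using attached_clique_props[of k ts] by (auto intro!: finite_SigmaI)

lemma card_parent_pairs: "valid_tree k ts \<Longrightarrow> card (parent_pairs ts) = k * length ts"
  unfolding parent_pairs_def using attached_clique_props[of k ts] by (subst card_SigmaI) auto

lemma finite_avail: "valid_tree k ts \<Longrightarrow> finite (avail k ts)"
  using finite_parent_pairs by (simp add: avail_decomp)

lemma card_avail: "valid_tree k ts \<Longrightarrow> card (avail k ts) = Suc (k * length ts)"
  unfolding avail_decomp
  using finite_parent_pairs root_clique_not_child card_parent_pairs child_clique_inj
  by (simp add: card_image)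

lemma sum_clique_outdeg:
  assumes "finite A"
  shows "(\<Sum>K\<in>A. clique_outdeg ts K) = card {i. i < length ts \<and> fst (ts ! i) \<in> A}"
proof -
  have "{i. i < length ts \<and> fst (ts ! i) \<in> A} = (\<Union>K\<in>A. {i. i < length ts \<and> fst (ts ! i) = K})"
    by auto
  moreover have "card (\<Union>K\<in>A. {i. i < length ts \<and> fst (ts ! i) = K}) =
      (\<Sum>K\<in>A. card {i. i < length ts \<and> fst (ts ! i) = K})"
    by (rule card_UN_disjoint[OF assms]) auto
  ultimately show ?thesis unfolding clique_outdeg_def by simp
qed

lemma finite_choices: "valid_tree k ts \<Longrightarrow> finite (choices k ts)"
  unfolding choices_def using finite_avail by auto

text \<open>Choices with clique in A: one new position per clique plus one per existing child.\<close>
lemma card_choices_in: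
  assumes "valid_tree k ts" "A \<subseteq> avail k ts"
  shows "card {x \<in> choices k ts. fst x \<in> A} = card A + card {i. i < length ts \<and> fst (ts ! i) \<in> A}"
proof -
  have fin: "finite A"
    using finite_avail[OF assms(1)] assms(2) finite_subset by blast
  have "{x \<in> choices k ts. fst x \<in> A} = Sigma A (\<lambda>K. {..clique_outdeg ts K})"
    using assms(2) unfolding choices_def by auto
  then have "card {x \<in> choices k ts. fst x \<in> A} = (\<Sum>K\<in>A. Suc (clique_outdeg ts K))"
    using fin by (simp add: card_SigmaI)
  also have "\<dots> = card A + (\<Sum>K\<in>A. clique_outdeg ts K)"
    by (simp only: Suc_eq_plus1_left sum.distrib) simp
  finally show ?thesis using sum_clique_outdeg[OF fin] by simp
qed

lemma card_choices: "valid_tree k ts \<Longrightarrow> card (choices k ts) = (k + 1) * length ts + 1"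
proof -
  assume valid: "valid_tree k ts"
  have "choices k ts = {x \<in> choices k ts. fst x \<in> avail k ts}"
    unfolding choices_def by auto
  moreover have "{i. i < length ts \<and> fst (ts ! i) \<in> avail k ts} = {..<length ts}"
    using attached_clique_avail[OF valid] by auto
  ultimately show ?thesis
    using card_choices_in[OF valid order_refl] card_avail[OF valid] by simp
qed

lemma sum_if_const:
  "finite A \<Longrightarrow> (\<Sum>x\<in>A. if P x then c else 0) = of_nat (card {x \<in> A. P x}) * (c :: 'a :: semiring_1)"
  by (simp flip: sum.inter_filter)

lemma card_child_cliques_containing:
  assumes "valid_tree k ts" "i < length ts" "1 \<le> j"
  shows "card {w \<in> fst (ts ! i). Nd j \<in> child_clique ts i w} =
         (if i = j - 1 then k else 0) + (if Nd j \<in> fst (ts ! i) then k - 1 else 0)"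
proof -
  have K: "finite (fst (ts ! i))" "card (fst (ts ! i)) = k" "fst (ts ! i) \<subseteq> vertices k i"
    using attached_clique_props[OF assms(1,2)] by auto
  show ?thesis
  proof (cases "i = j - 1")
    case True
    then have j: "j = Suc i" using assms(3) by simp
    have "Nd j \<notin> fst (ts ! i)"
      using K(3) unfolding j vertices_def by auto
    moreover have "{w \<in> fst (ts ! i). Nd j \<in> child_clique ts i w} = fst (ts ! i)"
      unfolding j child_clique_def by auto
    ultimately show ?thesis using K(2) True by simp
  next
    case False
    then have "Nd j \<noteq> Nd (Suc i)" using assms(3) by auto
    then have "{w \<in> fst (ts ! i). Nd j \<in> child_clique ts i w} =
        (if Nd j \<in> fst (ts ! i) then fst (ts ! i) - {Nd j} else {})"
      unfolding child_clique_def by auto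
    then show ?thesis using K(1,2) False by (simp add: card_Diff_singleton)
  qed
qed

lemma card_avail_containing:
  assumes "valid_tree k ts" "1 \<le> j" "j \<le> length ts"
  shows "card {K \<in> avail k ts. Nd j \<in> K} = k + (k - 1) * node_outdeg ts j"
proof -
  let ?C = "\<lambda>(i, w). child_clique ts i w"
  let ?P = "{p \<in> parent_pairs ts. Nd j \<in> ?C p}"
  have "{K \<in> avail k ts. Nd j \<in> K} = ?C ` ?P"
    unfolding avail_decomp by (auto simp: root_clique_def)
  then have "card {K \<in> avail k ts. Nd j \<in> K} = card ?P"
    using child_clique_inj[OF assms(1)] by (auto intro: card_image inj_on_subset)
  also have "?P = Sigma {..<length ts} (\<lambda>i. {w \<in> fst (ts ! i). Nd j \<in> child_clique ts i w})"
    unfolding parent_pairs_def by auto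
  also have "card \<dots> = (\<Sum>i<length ts. card {w \<in> fst (ts ! i). Nd j \<in> child_clique ts i w})"
    using attached_clique_props[OF assms(1)] by (subst card_SigmaI) auto
  also have "\<dots> = (\<Sum>i<length ts. (if i = j - 1 then k else 0))
                 + (\<Sum>i<length ts. (if Nd j \<in> fst (ts ! i) then k - 1 else 0))"
    using card_child_cliques_containing[OF assms(1) _ assms(2)] by (simp add: sum.distrib)
  also have "(\<Sum>i<length ts. (if i = j - 1 then k else 0)) = k"
    using assms(2,3) by simp
  also have "(\<Sum>i<length ts. (if Nd j \<in> fst (ts ! i) then k - 1 else 0)) = (k - 1) * node_outdeg ts j"
    unfolding sum_if_const[OF finite_lessThan] node_outdeg_def by (simp add: mult.commute)
  finally show ?thesis .
qed

lemma card_choices_containing: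
  assumes "k \<ge> 1" "valid_tree k ts" "1 \<le> j" "j \<le> length ts"
  shows "card {x \<in> choices k ts. Nd j \<in> fst x} = k + k * node_outdeg ts j"
proof -
  have "{x \<in> choices k ts. Nd j \<in> fst x} = {x \<in> choices k ts. fst x \<in> {K \<in> avail k ts. Nd j \<in> K}}"
    unfolding choices_def by auto
  also have "card \<dots> = card {K \<in> avail k ts. Nd j \<in> K} +
      card {i. i < length ts \<and> fst (ts ! i) \<in> {K \<in> avail k ts. Nd j \<in> K}}"
    by (rule card_choices_in[OF assms(2)]) auto
  also have "{i. i < length ts \<and> fst (ts ! i) \<in> {K \<in> avail k ts. Nd j \<in> K}} =
      {i. i < length ts \<and> Nd j \<in> fst (ts ! i)}"
    using attached_clique_avail[OF assms(2)] by auto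
  finally have "card {x \<in> choices k ts. Nd j \<in> fst x} = k + (k - 1) * node_outdeg ts j + node_outdeg ts j"
    using card_avail_containing[OF assms(2-4)] unfolding node_outdeg_def by simp
  then show ?thesis using assms(1) by (cases k) (auto simp: algebra_simps)
qed

lemma ktrees_0: "ktrees k 0 = {[]}"
  unfolding ktrees_def using valid_Nil by auto

lemma ktrees_Suc: "ktrees k (Suc n) = (\<lambda>(ts, x). ts @ [x]) ` Sigma (ktrees k n) (choices k)"
proof (intro equalityI subsetI)
  fix t assume t: "t \<in> ktrees k (Suc n)"
  then have "length t = Suc n" by (simp add: ktrees_def)
  then obtain ts x where tx: "t = ts @ [x]" "length ts = n"
    by (metis length_Suc_conv_rev)
  with t have "ts \<in> ktrees k n" "x \<in> choices k ts"
    by (simp_all add: ktrees_def valid_snoc)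
  with tx show "t \<in> (\<lambda>(ts, x). ts @ [x]) ` Sigma (ktrees k n) (choices k)" by force
next
  fix t assume "t \<in> (\<lambda>(ts, x). ts @ [x]) ` Sigma (ktrees k n) (choices k)"
  then show "t \<in> ktrees k (Suc n)" by (auto simp: ktrees_def valid_snoc)
qed

lemma finite_ktrees: "finite (ktrees k n)"
proof (induction n)
  case 0 then show ?case by (simp add: ktrees_0)
next
  case (Suc n)
  have "finite (Sigma (ktrees k n) (choices k))"
    using Suc finite_choices by (auto simp: ktrees_def intro!: finite_SigmaI)
  then show ?case unfolding ktrees_Suc by simp
qed

lemma card_ktrees_Suc_filter:
  "card {t \<in> ktrees k (Suc n). P t} = (\<Sum>ts\<in>ktrees k n. card {x \<in> choices k ts. P (ts @ [x])})"
proof -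
  have eq: "{t \<in> ktrees k (Suc n). P t} =
      (\<lambda>(ts, x). ts @ [x]) ` Sigma (ktrees k n) (\<lambda>ts. {x \<in> choices k ts. P (ts @ [x])})"
    unfolding ktrees_Suc by auto
  have "inj_on (\<lambda>(ts, x). ts @ [x]) (Sigma (ktrees k n) (\<lambda>ts. {x \<in> choices k ts. P (ts @ [x])}))"
    by (auto simp: inj_on_def)
  moreover have "\<forall>ts\<in>ktrees k n. finite {x \<in> choices k ts. P (ts @ [x])}"
    using finite_choices by (auto simp: ktrees_def)
  ultimately show ?thesis unfolding eq using finite_ktrees
    by (simp add: card_image)
qed

lemma Tsize_Suc: "Tsize k (Suc n) = Tsize k n * ((k + 1) * n + 1)"
proof -
  have "Tsize k (Suc n) = (\<Sum>ts\<in>ktrees k n. card (choices k ts))"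
    using card_ktrees_Suc_filter[of k n "\<lambda>_. True"] by (simp add: Tsize_def)
  also have "\<dots> = (\<Sum>ts\<in>ktrees k n. (k + 1) * n + 1)"
    using card_choices by (intro sum.cong) (auto simp: ktrees_def)
  finally show ?thesis by (simp add: Tsize_def)
qed

lemma Tsize_prod: "Tsize k n = (\<Prod>l<n. 1 + (k + 1) * l)"
proof (induction n)
  case 0
  then show ?case by (simp add: Tsize_def ktrees_0)
next
  case (Suc n)
  then show ?case by (simp add: Tsize_Suc)
qed

text \<open>Effect of one insertion on the out-degree d of node j: the new node raises it to d+1 in
  k (1 + d) ways and leaves it unchanged in the remaining ones.\<close>
lemma card_choices_outdeg:
  assumes "k \<ge> 1" "valid_tree k ts" "1 \<le> j" "j \<le> length ts"
  shows "int (card {x \<in> choices k ts. node_outdeg (ts @ [x]) j = m}) =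
     (if node_outdeg ts j = m then int ((k + 1) * length ts + 1) - int (k + k * m) else 0)
     + (if Suc (node_outdeg ts j) = m then int (k * m) else 0)"
proof -
  define d where "d = node_outdeg ts j"
  let ?W = "{x \<in> choices k ts. Nd j \<in> fst x}"
  let ?N = "{x \<in> choices k ts. Nd j \<notin> fst x}"
  have card_W: "card ?W = k + k * d"
    unfolding d_def using card_choices_containing[OF assms] .
  have "card (choices k ts) = card ?W + card ?N"
    using finite_choices[OF assms(2)] by (subst card_Un_disjoint[symmetric]) (auto intro: arg_cong[where f = card])
  then have card_N: "int (card ?N) = int ((k + 1) * length ts + 1) - int (k + k * d)"
    using card_choices[OF assms(2)] card_W by simp
  have "{x \<in> choices k ts. node_outdeg (ts @ [x]) j = m} =
      (if d = m then ?N else if Suc d = m then ?W else {})"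
    unfolding node_outdeg_snoc d_def by auto
  then show ?thesis
    using card_N card_W unfolding d_def[symmetric] by (auto simp: algebra_simps)
qed

lemma Tcount_Suc:
  assumes "k \<ge> 1" "1 \<le> j" "j \<le> n"
  shows "int (Tcount k (Suc n) j m) =
     (int ((k + 1) * n + 1) - int (k + k * m)) * int (Tcount k n j m)
     + int (k * m) * int (Tcount k n j (m - 1))"
proof -
  have shifted: "int (card {ts \<in> ktrees k n. Suc (node_outdeg ts j) = m}) * int (k * m)
      = int (Tcount k n j (m - 1)) * int (k * m)"
  proof (cases m)
    case (Suc m')
    then show ?thesis by (simp add: Tcount_def)
  qed simp
  have "int (Tcount k (Suc n) j m) =
      (\<Sum>ts\<in>ktrees k n. int (card {x \<in> choices k ts. node_outdeg (ts @ [x]) j = m}))"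
    unfolding Tcount_def card_ktrees_Suc_filter by simp
  also have "\<dots> = (\<Sum>ts\<in>ktrees k n.
      (if node_outdeg ts j = m then int ((k + 1) * n + 1) - int (k + k * m) else 0)
      + (if Suc (node_outdeg ts j) = m then int (k * m) else 0))"
    using card_choices_outdeg[OF assms(1) _ assms(2)] assms(3)
    by (intro sum.cong) (auto simp: ktrees_def)
  also have "\<dots> = (int ((k + 1) * n + 1) - int (k + k * m)) * int (Tcount k n j m)
     + int (k * m) * int (Tcount k n j (m - 1))"
    unfolding sum.distrib sum_if_const[OF finite_ktrees] shifted by (simp add: Tcount_def mult.commute)
  finally show ?thesis .
qed

lemma Tcount_rec:
  assumes "k \<ge> 1" "1 \<le> j" "j < n"
  shows "int (Tcount k n j m)
              = (int ((k + 1) * n) - int (k * m) - int (2 * k)) * int (Tcount k (n - 1) j m)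
                + int (k * m) * int (Tcount k (n - 1) j (m - 1))"
proof -
  obtain n' where n: "n = Suc n'" and "j \<le> n'"
    using assms(3) by (cases n) auto
  have "int ((k + 1) * n) - int (k * m) - int (2 * k) = int ((k + 1) * n' + 1) - int (k + k * m)"
    unfolding n by (simp add: algebra_simps)
  with Tcount_Suc[OF assms(1,2) \<open>j \<le> n'\<close>] show ?thesis
    unfolding n by simp
qed

lemma Tcount_diag: "Tcount k j j m = (if m = 0 then Tsize k j else 0)"
proof -
  have "node_outdeg ts j = 0" if tree: "ts \<in> ktrees k j" for ts
  proof -
    have "Nd j \<notin> fst (ts ! i)" if "i < length ts" for i
    proof -
      have "fst (ts ! i) \<subseteq> vertices k i"
        using attached_clique_props[OF _ that] tree by (simp add: ktrees_def)
      with that tree show ?thesis by (auto simp: ktrees_def vertices_def)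
    qed
    then show ?thesis by (simp add: node_outdeg_def)
  qed
  then have "{ts \<in> ktrees k j. node_outdeg ts j = m} = (if m = 0 then ktrees k j else {})"
    by auto
  then show ?thesis unfolding Tcount_def Tsize_def by simp
qed

lemma Tcount_eq_0: "n < m \<Longrightarrow> Tcount k n j m = 0"
proof -
  assume "n < m"
  then have "node_outdeg ts j \<noteq> m" if "ts \<in> ktrees k n" for ts
    using node_outdeg_le[of ts j] that by (auto simp: ktrees_def)
  then have "{ts \<in> ktrees k n. node_outdeg ts j = m} = {}"
    by blast
  then show ?thesis unfolding Tcount_def by (simp only: card.empty)
qed


section \<open>The operator (1 - c z) d/dz on formal power series\<close>

unbundle fps_syntax

text \<open>For an exponential generating function \<Sum>_i a_i z^i/i!, the coefficient of z^i/i! in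
  (1 - c z) f' is a_{i+1} - c i a_i, so recurrences of this shape become first-order linear
  ODEs for this operator.\<close>
definition lin_deriv :: "'a::comm_ring_1 \<Rightarrow> 'a fps \<Rightarrow> 'a fps" where
  "lin_deriv c f = (1 - fps_const c * fps_X) * fps_deriv f"

lemma lin_deriv_nth:
  "lin_deriv c f $ n = of_nat (n + 1) * f $ (n + 1) - c * of_nat n * f $ n"
proof -
  have "lin_deriv c f = fps_deriv f - fps_const c * (fps_X * fps_deriv f)"
    unfolding lin_deriv_def by (simp add: algebra_simps)
  then show ?thesis unfolding lin_deriv_def by (cases n) (simp_all add: algebra_simps)
qed

lemma lin_deriv_diff: "lin_deriv c (f - g) = lin_deriv c f - lin_deriv c g"
  unfolding lin_deriv_def by (simp add: algebra_simps)

lemma lin_deriv_const_mult: "lin_deriv c (fps_const a * f) = fps_const a * lin_deriv c f"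
  unfolding lin_deriv_def by (simp add: algebra_simps)

lemma lin_deriv_mult: "lin_deriv c (f * g) = lin_deriv c f * g + f * lin_deriv c g"
  unfolding lin_deriv_def by (simp add: algebra_simps)

lemma lin_deriv_power: "lin_deriv c (f ^ Suc n) = of_nat (Suc n) * f ^ n * lin_deriv c f"
  unfolding lin_deriv_def fps_deriv_power' by (simp add: algebra_simps)

lemma lin_deriv_eigen_unique:
  fixes f :: "'a::field_char_0 fps"
  assumes "lin_deriv c f = fps_const a * f" "f $ 0 = 0"
  shows "f = 0"
proof -
  have "f $ n = 0" for n
  proof (induction n)
    case 0 then show ?case using assms(2) .
  next
    case (Suc n)
    have "lin_deriv c f $ n = (fps_const a * f) $ n"
      using assms(1) by simp
    with Suc show ?case
      by (simp add: lin_deriv_nth) (metis of_nat_Suc of_nat_neq_0)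
  qed
  then show ?thesis by (simp add: fps_eq_iff)
qed

section \<open>The binomial series (1 - c z)^a\<close>

lemma fps_lin_pow_nth: "fps_lin_pow c a $ n = (- c) ^ n * (a gchoose n)"
  unfolding fps_lin_pow_def by simp

lemma fps_lin_pow_nth_0: "fps_lin_pow c a $ 0 = 1"
  by (simp add: fps_lin_pow_nth)

lemma fps_lin_pow_zero: "fps_lin_pow c 0 = 1"
  by (simp add: fps_eq_iff fps_lin_pow_nth gbinomial_0_left)

lemma fps_lin_pow_add: "fps_lin_pow c a * fps_lin_pow c b = fps_lin_pow c (a + b)"
  unfolding fps_lin_pow_def fps_binomial_add_mult
  by (rule fps_compose_mult_distrib[symmetric]) simp

lemma gbinomial_Suc_recurrence:
  "of_nat (Suc n) * ((a :: 'a :: field_char_0) gchoose Suc n) + of_nat n * (a gchoose n)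
     = a * (a gchoose n)"
  using gbinomial_absorption[of n a] gbinomial_absorb_comp[of a n] by (simp add: algebra_simps)

lemma lin_deriv_fps_lin_pow:
  "lin_deriv c (fps_lin_pow c a) = fps_const (- c * a) * fps_lin_pow c a"
proof (rule fps_ext)
  fix n
  have "lin_deriv c (fps_lin_pow c a) $ n
      = - c * (- c) ^ n * (of_nat (Suc n) * (a gchoose Suc n) + of_nat n * (a gchoose n))"
    by (simp add: lin_deriv_nth fps_lin_pow_nth algebra_simps)
  also have "\<dots> = - c * (- c) ^ n * (a * (a gchoose n))"
    by (simp only: gbinomial_Suc_recurrence)
  finally show "lin_deriv c (fps_lin_pow c a) $ n = (fps_const (- c * a) * fps_lin_pow c a) $ n"
    by (simp add: fps_lin_pow_nth)
qed

section \<open>Generating functions of the out-degree counts\<close>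

definition rate :: "nat \<Rightarrow> nat \<Rightarrow> real" where
  "rate k j = real k * real j - real k + real j + 1"

text \<open>W = 1 - (1 - (k+1) z)^{k/(k+1)}, each child of node j contributes a factor W.\<close>
definition W_fps :: "nat \<Rightarrow> real fps" where
  "W_fps k = 1 - fps_lin_pow (real (k + 1)) (real k / real (k + 1))"

text \<open>Q = (1 - (k+1) z)^{-\<gamma>/(k+1)}, so that A_0 = T_j Q.\<close>
definition Q_fps :: "nat \<Rightarrow> nat \<Rightarrow> real fps" where
  "Q_fps k j = fps_lin_pow (real (k + 1)) (- (rate k j / real (k + 1)))"

definition outdeg_egf :: "nat \<Rightarrow> nat \<Rightarrow> nat \<Rightarrow> real fps" where
  "outdeg_egf k j m = Abs_fps (\<lambda>i. real (Tcount k (j + i) j m) / fact i)"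

lemma W_fps_nth_0: "W_fps k $ 0 = 0"
  by (simp add: W_fps_def fps_lin_pow_nth_0)

lemma lin_deriv_W_fps:
  "lin_deriv (real (k + 1)) (W_fps k) = fps_const (real k) * (1 - W_fps k)"
proof -
  have "lin_deriv (real (k + 1)) (W_fps k) =
     - lin_deriv (real (k + 1)) (fps_lin_pow (real (k + 1)) (real k / real (k + 1)))"
    unfolding W_fps_def lin_deriv_def by simp
  also have "\<dots> = fps_const (real k) * fps_lin_pow (real (k + 1)) (real k / real (k + 1))"
    unfolding lin_deriv_fps_lin_pow by (simp flip: fps_const_neg del: of_nat_Suc)
  finally show ?thesis by (simp add: W_fps_def)
qed

lemma lin_deriv_Q_fps: "lin_deriv (real (k + 1)) (Q_fps k j) = fps_const (rate k j) * Q_fps k j"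
proof -
  have "- real (k + 1) * (- (rate k j / real (k + 1))) = rate k j"
    by (simp del: of_nat_Suc)
  then show ?thesis unfolding Q_fps_def lin_deriv_fps_lin_pow by simp
qed

lemma Tcount_rec_real:
  assumes "k \<ge> 1" "j \<ge> 1"
  shows "real (Tcount k (j + Suc i) j m) =
     (real (k + 1) * real i + rate k j - real k * real m) * real (Tcount k (j + i) j m)
     + real k * real m * real (Tcount k (j + i) j (m - 1))"
proof -
  have "real_of_int (int (Tcount k (j + Suc i) j m)) = real_of_int (
     (int ((k + 1) * (j + Suc i)) - int (k * m) - int (2 * k)) * int (Tcount k (j + i) j m)
     + int (k * m) * int (Tcount k (j + i) j (m - 1)))"
    using Tcount_rec[OF assms, of "j + Suc i" m] by simp
  then show ?thesis unfolding rate_def by (simp add: algebra_simps)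
qed

lemma lin_deriv_outdeg_egf:
  assumes "k \<ge> 1" "j \<ge> 1"
  shows "lin_deriv (real (k + 1)) (outdeg_egf k j m)
     = fps_const (rate k j - real k * real m) * outdeg_egf k j m
       + fps_const (real k * real m) * outdeg_egf k j (m - 1)"
proof (rule fps_ext)
  fix i
  let ?a = "\<lambda>i m. real (Tcount k (j + i) j m)"
  have fact_Suc: "real (i + 1) * (x / fact (Suc i)) = x / fact i" for x :: real
    by (simp add: fact_Suc field_simps del: of_nat_Suc)
  have "lin_deriv (real (k + 1)) (outdeg_egf k j m) $ i
     = (?a (Suc i) m - real (k + 1) * real i * ?a i m) / fact i"
    by (simp add: lin_deriv_nth outdeg_egf_def fact_Suc diff_divide_distrib)
  also have "\<dots> = ((rate k j - real k * real m) * ?a i m + real k * real m * ?a i (m - 1)) / fact i"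
    using Tcount_rec_real[OF assms, of i m] by (simp add: algebra_simps)
  finally show "lin_deriv (real (k + 1)) (outdeg_egf k j m) $ i =
     (fps_const (rate k j - real k * real m) * outdeg_egf k j m
       + fps_const (real k * real m) * outdeg_egf k j (m - 1)) $ i"
    by (simp add: outdeg_egf_def add_divide_distrib)
qed

lemma lin_deriv_closed_form:
  "lin_deriv (real (k + 1)) (fps_const (real (Tsize k j)) * (W_fps k ^ m * Q_fps k j))
     = fps_const (rate k j - real k * real m) * (fps_const (real (Tsize k j)) * (W_fps k ^ m * Q_fps k j))
       + fps_const (real k * real m) * (fps_const (real (Tsize k j)) * (W_fps k ^ (m - 1) * Q_fps k j))"
proof (cases m)
  case 0
  have "lin_deriv (real (k + 1)) (fps_const (real (Tsize k j)) * Q_fps k j)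
      = fps_const (real (Tsize k j)) * (fps_const (rate k j) * Q_fps k j)"
    by (simp only: lin_deriv_const_mult lin_deriv_Q_fps)
  with 0 show ?thesis by (simp add: algebra_simps)
next
  case (Suc n)
  let ?W = "W_fps k" and ?Q = "Q_fps k j" and ?T = "fps_const (real (Tsize k j))"
  let ?K = "fps_const (real k)" and ?N = "of_nat (Suc n) :: real fps" and ?R = "fps_const (rate k j)"
  have coeffs: "fps_const (rate k j - real k * real m) = ?R - ?K * ?N"
               "fps_const (real k * real m) = ?K * ?N"
    unfolding Suc by (simp_all flip: fps_of_nat)
  have "lin_deriv (real (k + 1)) (?W ^ m * ?Q) = ?N * ?W ^ n * (?K * (1 - ?W)) * ?Q + ?W ^ Suc n * (?R * ?Q)"
    unfolding Suc lin_deriv_mult lin_deriv_power lin_deriv_W_fps lin_deriv_Q_fps ..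
  then have "lin_deriv (real (k + 1)) (?T * (?W ^ m * ?Q))
      = ?T * (?N * ?W ^ n * (?K * (1 - ?W)) * ?Q + ?W ^ Suc n * (?R * ?Q))"
    by (simp only: lin_deriv_const_mult)
  also have "\<dots> = (?R - ?K * ?N) * (?T * (?W ^ Suc n * ?Q)) + ?K * ?N * (?T * (?W ^ n * ?Q))"
    by (simp only: power_Suc) algebra
  finally show ?thesis
    unfolding coeffs unfolding Suc by simp
qed

text \<open>By uniqueness of the ODE solutions (induction on m), A_m = T_j W^m Q.\<close>
lemma outdeg_egf_closed_form:
  assumes "k \<ge> 1" "j \<ge> 1"
  shows "outdeg_egf k j m = fps_const (real (Tsize k j)) * (W_fps k ^ m * Q_fps k j)"
proof (induction m)
  case 0
  let ?f = "outdeg_egf k j 0 - fps_const (real (Tsize k j)) * (W_fps k ^ 0 * Q_fps k j)"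
  have "lin_deriv (real (k + 1)) ?f = fps_const (rate k j) * ?f"
    using lin_deriv_outdeg_egf[OF assms, of 0] lin_deriv_closed_form[of k j 0]
    by (simp add: lin_deriv_diff algebra_simps)
  moreover have "?f $ 0 = 0"
    by (simp add: outdeg_egf_def Q_fps_def fps_lin_pow_nth_0 Tcount_diag)
  ultimately show ?case using lin_deriv_eigen_unique by fastforce
next
  case (Suc m)
  let ?f = "outdeg_egf k j (Suc m) - fps_const (real (Tsize k j)) * (W_fps k ^ Suc m * Q_fps k j)"
  have "lin_deriv (real (k + 1)) ?f = fps_const (rate k j - real k * real (Suc m)) * ?f"
    using lin_deriv_outdeg_egf[OF assms, of "Suc m"] lin_deriv_closed_form[of k j "Suc m"] Suc.IH
    by (simp add: lin_deriv_diff algebra_simps)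
  moreover have "?f $ 0 = 0"
    by (simp add: outdeg_egf_def Tcount_diag W_fps_nth_0)
  ultimately show ?case using lin_deriv_eigen_unique by fastforce
qed

definition outdeg_bgf :: "nat \<Rightarrow> nat \<Rightarrow> real \<Rightarrow> real fps" where
  "outdeg_bgf k j v = Abs_fps (\<lambda>i. \<Sum>m\<le>j + i. real (Tcount k (j + i) j m) * v ^ m / fact i)"

text \<open>Its coefficients as sums over any range of m containing all non-zero terms.\<close>
lemma outdeg_bgf_nth:
  "l \<le> i \<Longrightarrow> outdeg_bgf k j v $ l = (\<Sum>m\<le>j + i. v ^ m * outdeg_egf k j m $ l)"
proof -
  assume "l \<le> i"
  have "outdeg_bgf k j v $ l = (\<Sum>m\<le>j + l. v ^ m * outdeg_egf k j m $ l)"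
    unfolding outdeg_bgf_def outdeg_egf_def by (simp add: algebra_simps)
  also have "\<dots> = (\<Sum>m\<le>j + i. v ^ m * outdeg_egf k j m $ l)"
    using \<open>l \<le> i\<close> by (intro sum.mono_neutral_left) (auto simp: outdeg_egf_def Tcount_eq_0)
  finally show ?thesis .
qed

text \<open>Since A_m W = A_{m+1}, the sum \<Sum>_m v^m A_m telescopes against 1 - v W.\<close>
lemma outdeg_bgf_times:
  assumes "k \<ge> 1" "j \<ge> 1"
  shows "outdeg_bgf k j v * (1 - fps_const v * W_fps k) = outdeg_egf k j 0"
proof (rule fps_ext)
  fix i
  let ?A = "outdeg_egf k j" and ?W = "W_fps k" and ?B = "j + i"
  have shift: "?A m * ?W = ?A (Suc m)" for m
    unfolding outdeg_egf_closed_form[OF assms] by (simp add: algebra_simps)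
  have "(outdeg_bgf k j v * ?W) $ i = (\<Sum>l=0..i. \<Sum>m\<le>?B. v ^ m * (?A m $ l * ?W $ (i - l)))"
    by (simp add: fps_mult_nth outdeg_bgf_nth sum_distrib_right mult.assoc)
  also have "\<dots> = (\<Sum>m\<le>?B. \<Sum>l=0..i. v ^ m * (?A m $ l * ?W $ (i - l)))"
    by (rule sum.swap)
  also have "\<dots> = (\<Sum>m\<le>?B. v ^ m * (?A m * ?W) $ i)"
    by (simp add: fps_mult_nth sum_distrib_left)
  finally have times_W: "(outdeg_bgf k j v * ?W) $ i = (\<Sum>m\<le>?B. v ^ m * ?A (Suc m) $ i)"
    unfolding shift .
  have "outdeg_bgf k j v * (1 - fps_const v * ?W) = outdeg_bgf k j v - fps_const v * (outdeg_bgf k j v * ?W)"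
    by (simp add: algebra_simps)
  then have "(outdeg_bgf k j v * (1 - fps_const v * ?W)) $ i
      = outdeg_bgf k j v $ i - v * (outdeg_bgf k j v * ?W) $ i"
    by simp
  also have "\<dots> = (\<Sum>m\<le>?B. v ^ m * ?A m $ i - v ^ Suc m * ?A (Suc m) $ i)"
    unfolding times_W outdeg_bgf_nth[OF order_refl]
    by (simp add: sum_subtractf sum_distrib_left mult.assoc)
  also have "\<dots> = ?A 0 $ i - v ^ Suc ?B * ?A (Suc ?B) $ i"
    using sum_telescope[of "\<lambda>m. v ^ m * ?A m $ i" ?B] by simp
  also have "\<dots> = ?A 0 $ i"
    by (simp add: outdeg_egf_def Tcount_eq_0)
  finally show "(outdeg_bgf k j v * (1 - fps_const v * ?W)) $ i = ?A 0 $ i" .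
qed

lemma outdeg_bgf_closed_form:
  assumes "k \<ge> 1" "j \<ge> 1"
  shows "outdeg_bgf k j v = fps_const (real (Tsize k j)) /
           ((1 - fps_const v * W_fps k) * fps_lin_pow (real (k + 1)) (rate k j / real (k + 1)))"
proof -
  let ?M = "(1 - fps_const v * W_fps k) * fps_lin_pow (real (k + 1)) (rate k j / real (k + 1))"
  have unit: "?M $ 0 \<noteq> 0"
    by (simp add: W_fps_nth_0 fps_lin_pow_nth_0)
  have "outdeg_bgf k j v * ?M
      = fps_const (real (Tsize k j)) * (Q_fps k j * fps_lin_pow (real (k + 1)) (rate k j / real (k + 1)))"
    unfolding mult.assoc[symmetric] outdeg_bgf_times[OF assms] outdeg_egf_closed_form[OF assms]
    by simp
  also have "\<dots> = fps_const (real (Tsize k j))"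
    unfolding Q_fps_def fps_lin_pow_add by (simp add: fps_lin_pow_zero)
  finally have product: "outdeg_bgf k j v * ?M = fps_const (real (Tsize k j))" .
  have "fps_const (real (Tsize k j)) / ?M = outdeg_bgf k j v * (?M * inverse ?M)"
    unfolding product[symmetric] fps_divide_unit[OF unit] by (simp add: mult.assoc)
  also have "\<dots> = outdeg_bgf k j v"
    using inverse_mult_eq_1'[OF unit] by simp
  finally show ?thesis by (rule sym)
qed

theorem mainTheorem11:
  fixes k j :: nat
  assumes "k \<ge> 1" and "j \<ge> 1"
  shows "(\<forall>n m. n > j \<longrightarrow>
            int (Tcount k n j m)
              = (int ((k + 1) * n) - int (k * m) - int (2 * k)) * int (Tcount k (n - 1) j m)
                + int (k * m) * int (Tcount k (n - 1) j (m - 1)))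
       \<and> Tsize k j = (\<Prod>l<j. 1 + (k + 1) * l)
       \<and> (\<forall>v :: real.
            Abs_fps (\<lambda>i. \<Sum>m\<le>j + i. real (Tcount k (j + i) j m) * v ^ m / fact i)
            = fps_const (real (Tsize k j)) /
                ((1 - fps_const v * (1 - fps_lin_pow (real (k + 1)) (real k / real (k + 1))))
                 * fps_lin_pow (real (k + 1))
                     ((real k * real j - real k + real j + 1) / real (k + 1))))"
proof (intro conjI allI impI)
  fix n m :: nat
  assume "n > j"
  then show "int (Tcount k n j m)
      = (int ((k + 1) * n) - int (k * m) - int (2 * k)) * int (Tcount k (n - 1) j m)
        + int (k * m) * int (Tcount k (n - 1) j (m - 1))"
    using Tcount_rec[OF assms] by blast
next
  show "Tsize k j = (\<Prod>l<j. 1 + (k + 1) * l)"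
    by (rule Tsize_prod)
next
  fix v :: real
  show "Abs_fps (\<lambda>i. \<Sum>m\<le>j + i. real (Tcount k (j + i) j m) * v ^ m / fact i)
      = fps_const (real (Tsize k j)) /
          ((1 - fps_const v * (1 - fps_lin_pow (real (k + 1)) (real k / real (k + 1))))
           * fps_lin_pow (real (k + 1)) ((real k * real j - real k + real j + 1) / real (k + 1)))"
    using outdeg_bgf_closed_form[OF assms, of v] unfolding outdeg_bgf_def W_fps_def rate_def .
qed

end
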